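(* Let $C_S(\boldsymbol\lambda,\boldsymbol\sigma)=\frac12E\{\log_2(1+\gamma_S)\}$, where $\boldsymbol\lambda=(\lambda_1,\dots,\lambda_N)$ and $\boldsymbol\sigma=(\sigma_1,\dots,\sigma_N)$ are the decreasingly ordered eigenvalue vectors (entries in $(0,\infty)$) of $R_r$ and $R_t$. (i) For fixed $\boldsymbol\lambda$, if $\boldsymbol\sigma^{(1)}\succ\boldsymbol\sigma^{(2)}$ then $C_S(\boldsymbol\lambda,\boldsymbol\sigma^{(1)})\ge C_S(\boldsymbol\lambda,\boldsymbol\sigma^{(2)})$ (Schur-convexity in the transmit eigenvalues). (ii) For fixed $\boldsymbol\sigma$, if $\boldsymbol\lambda^{(1)}\succ\boldsymbol\lambda^{(2)}$ and the largest entries coincide, $\lambda^{(1)}_1=\lambda^{(2)}_1$, then $C_S(\boldsymbol\lambda^{(1)},\boldsymbol\sigma)\le C_S(\boldsymbol\lambda^{(2)},\boldsymbol\sigma)$.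
   Context: Fix an integer $N\ge 1$ and constants $\eta\in(0,1]$, $\theta\in(0,1)$, $\rho>0$, $d_1,d_2>0$, $\tau>0$. Let $g_1,\dots,g_N,q$ be i.i.d. zero-mean circularly symmetric complex Gaussian random variables of unit variance, $S=\sum_{i=1}^N\lambda_i|g_i|^2$, and $$\gamma_S=\frac{\frac{\eta\theta(1-\theta)\rho^2}{d_1^{2\tau}d_2^\tau}\,S\,\lambda_1|g_1|^2\,\sigma_1|q|^2}{\frac{\eta\theta\rho}{d_1^\tau d_2^\tau}\,S\,\sigma_1|q|^2+\frac{(1-\theta)\rho}{d_1^\tau}\lambda_1|g_1|^2+1},$$ where $\lambda_1\ge\dots\ge\lambda_N$ and $\sigma_1\ge\dots\ge\sigma_N$. Majorization: for $\mathbf a,\mathbf b\in\mathbb R^N$ with decreasingly sorted entries, $\mathbf a\succ\mathbf b$ means $\sum_{i=1}^k a_{[i]}\ge\sum_{i=1}^k b_{[i]}$ for $k=1,\dots,N-1$ and $\sum_{i=1}^N a_{[i]}=\sum_{i=1}^N b_{[i]}$. *)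

theory Defs
  imports "HOL-Probability.Probability"
begin

text \<open>Zero-mean circularly symmetric complex Gaussian of unit variance:
  real and imaginary parts independent N(0, 1/2).\<close>
definition cgauss :: "complex measure" where
  "cgauss = distr (density lborel (normal_density 0 (sqrt (1/2)))
                   \<Otimes>\<^sub>M density lborel (normal_density 0 (sqrt (1/2))))
                  borel (\<lambda>(x, y). Complex x y)"

text \<open>Joint law of (g_1,...,g_N) (indices 0..N-1) and q, all i.i.d. cgauss.\<close>
definition channel_space :: "nat \<Rightarrow> ((nat \<Rightarrow> complex) \<times> complex) measure" where
  "channel_space N = (PiM {..<N} (\<lambda>_. cgauss)) \<Otimes>\<^sub>M cgauss"

text \<open>The SNR gamma_S. Vectors lam, sig are lists with lam!0 = lambda_1, etc.\<close>
definition gammaS ::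
  "nat \<Rightarrow> real \<Rightarrow> real \<Rightarrow> real \<Rightarrow> real \<Rightarrow> real \<Rightarrow> real \<Rightarrow> real list \<Rightarrow> real list
    \<Rightarrow> (nat \<Rightarrow> complex) \<Rightarrow> complex \<Rightarrow> real" where
  "gammaS N \<eta> \<theta> \<rho> d1 d2 \<tau> lam sig g q =
     (let S = (\<Sum>i<N. lam ! i * (cmod (g i))\<^sup>2);
          a = lam ! 0 * (cmod (g 0))\<^sup>2;
          b = sig ! 0 * (cmod q)\<^sup>2
      in ((\<eta> * \<theta> * (1 - \<theta>) * \<rho>\<^sup>2 / (d1 powr (2 * \<tau>) * d2 powr \<tau>)) * S * a * b) /
         ((\<eta> * \<theta> * \<rho> / (d1 powr \<tau> * d2 powr \<tau>)) * S * b
          + ((1 - \<theta>) * \<rho> / d1 powr \<tau>) * a + 1))"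

definition CS ::
  "nat \<Rightarrow> real \<Rightarrow> real \<Rightarrow> real \<Rightarrow> real \<Rightarrow> real \<Rightarrow> real \<Rightarrow> real list \<Rightarrow> real list \<Rightarrow> real" where
  "CS N \<eta> \<theta> \<rho> d1 d2 \<tau> lam sig =
     (1/2) * (\<integral>w. log 2 (1 + gammaS N \<eta> \<theta> \<rho> d1 d2 \<tau> lam sig (fst w) (snd w))
                \<partial>channel_space N)"

definition eigvec :: "nat \<Rightarrow> real list \<Rightarrow> bool" where
  "eigvec N v \<longleftrightarrow> length v = N \<and> (\<forall>x\<in>set v. x > 0) \<and> sorted_wrt (\<ge>) v"

definition majorizes :: "real list \<Rightarrow> real list \<Rightarrow> bool" where
  "majorizes a b \<longleftrightarrow> length a = length b \<and>
     (\<forall>k\<in>{1..<length a}. sum_list (take k (rev (sort a))) \<ge> sum_list (take k (rev (sort b)))) \<and>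
     sum_list a = sum_list b"

end

theory Submission
  imports Defs
begin

(* The coefficients of gamma_S factor as A = B C, so with X = B S sigma_1 |q|^2 and
   Y = C lambda_1 |g_1|^2 the SNR is the dual-hop expression X Y / (X + Y + 1), which is
   nondecreasing in X and makes log (1 + gamma_S) concave in X.
   (i) The eigenvalues sigma enter only through sigma_1, and majorization gives
   sigma_1 of sigma^(1) \<ge> sigma_1 of sigma^(2).
   (ii) For fixed lambda_1, Y is fixed and X is linear in (lambda_2, ..., lambda_N), so C_S is
   concave there; it is also invariant under permutations of these entries because the g_i are
   i.i.d.  A majorization with equal first entries is realized by finitely many T-transforms
   among the entries 2..N, none of which can decrease a symmetric concave function. *)

lemma concave_on_mono_comp:
  fixes f g :: "real \<Rightarrow> real"
  assumes f: "concave_on S f" and g: "concave_on T g" and "f ` S \<subseteq> T" and "mono_on T g"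
  shows "concave_on S (\<lambda>x. g (f x))"
proof (rule concave_on_linorderI)
  show "convex S" using f by (rule concave_on_imp_convex)
  fix t x y :: real assume t: "0 < t" "t < 1" and xy: "x \<in> S" "y \<in> S" "x < y"
  have fx: "f x \<in> T" "f y \<in> T" "f ((1 - t) *\<^sub>R x + t *\<^sub>R y) \<in> T"
    using assms(3) xy t convexD_alt[OF concave_on_imp_convex[OF f], of x y t] by auto
  have "(1 - t) * g (f x) + t * g (f y) \<le> g ((1 - t) *\<^sub>R f x + t *\<^sub>R f y)"
    using concave_onD[OF g] t fx by simp
  also have "\<dots> \<le> g (f ((1 - t) *\<^sub>R x + t *\<^sub>R y))"
  proof (rule mono_onD[OF \<open>mono_on T g\<close>])
    show "(1 - t) *\<^sub>R f x + t *\<^sub>R f y \<in> T"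
      using convexD_alt[OF concave_on_imp_convex[OF g], of "f x" "f y" t] fx t by (simp add: algebra_simps)
    show "f ((1 - t) *\<^sub>R x + t *\<^sub>R y) \<in> T" by (fact fx(3))
    show "(1 - t) *\<^sub>R f x + t *\<^sub>R f y \<le> f ((1 - t) *\<^sub>R x + t *\<^sub>R y)"
      using concave_onD[OF f] t xy by simp
  qed
  finally show "(1 - t) * g (f x) + t * g (f y) \<le> g (f ((1 - t) *\<^sub>R x + t *\<^sub>R y))" .
qed

lemma saturating_ratio_mono:
  fixes K c x y :: real
  assumes "0 \<le> K" "0 < c" "0 \<le> x" "x \<le> y"
  shows "K * x / (x + c) \<le> K * y / (y + c)"
proof -
  have "K * x * (y + c) \<le> K * y * (x + c)"
    using assms by (simp add: algebra_simps mult_left_mono)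
  then show ?thesis using assms by (simp add: divide_simps)
qed

lemma concave_on_saturating_ratio:
  fixes K c :: real
  assumes "0 \<le> K" "0 < c"
  shows "concave_on {0..} (\<lambda>x. K * x / (x + c))"
proof (rule concave_on_linorderI)
  fix t x y :: real assume t: "0 < t" "t < 1" and xy: "x \<in> {0..}" "y \<in> {0..}" "x < y"
  define s where "s = (1 - t) * x + t * y"
  have pos: "x + c > 0" "y + c > 0" "s + c > 0"
    using assms xy t by (auto simp: s_def intro!: add_nonneg_pos)
  have "K * s * (x + c) * (y + c) - ((1 - t) * K * x * (y + c) * (s + c) + t * K * y * (x + c) * (s + c))
      = K * c * t * (1 - t) * (x - y)\<^sup>2"
    unfolding s_def power2_eq_square by algebra
  moreover have "K * c * t * (1 - t) * (x - y)\<^sup>2 \<ge> 0" using assms t by simp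
  ultimately have "(1 - t) * (K * x / (x + c)) + t * (K * y / (y + c)) \<le> K * s / (s + c)"
    using pos by (simp add: divide_simps) (simp add: algebra_simps)
  then show "(1 - t) * (K * x / (x + c)) + t * (K * y / (y + c))
      \<le> K * ((1 - t) *\<^sub>R x + t *\<^sub>R y) / ((1 - t) *\<^sub>R x + t *\<^sub>R y + c)"
    by (simp add: s_def)
qed simp

definition dual_hop_snr :: "real \<Rightarrow> real \<Rightarrow> real" where
  "dual_hop_snr X Y = X * Y / (X + Y + 1)"

lemma dual_hop_snr_eq_ratio: "dual_hop_snr X Y = Y * X / (X + (Y + 1))"
  by (simp add: dual_hop_snr_def ac_simps)

lemma dual_hop_snr_nonneg: "0 \<le> X \<Longrightarrow> 0 \<le> Y \<Longrightarrow> 0 \<le> dual_hop_snr X Y"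
  by (simp add: dual_hop_snr_def)

lemma dual_hop_snr_le:
  assumes "0 \<le> X" "0 \<le> Y"
  shows "dual_hop_snr X Y \<le> Y"
proof -
  have "X * Y \<le> Y * (X + Y + 1)" using assms by (simp add: algebra_simps)
  then show ?thesis using assms by (simp add: dual_hop_snr_def divide_simps)
qed

lemma dual_hop_snr_mono:
  "0 \<le> Y \<Longrightarrow> 0 \<le> X \<Longrightarrow> X \<le> X' \<Longrightarrow> dual_hop_snr X Y \<le> dual_hop_snr X' Y"
  unfolding dual_hop_snr_eq_ratio by (rule saturating_ratio_mono) auto

lemma concave_on_log_dual_hop_snr:
  assumes "0 \<le> Y"
  shows "concave_on {0..} (\<lambda>X. log 2 (1 + dual_hop_snr X Y))"
proof -
  have "concave_on {0..} (\<lambda>X. 1 + dual_hop_snr X Y)"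
    unfolding dual_hop_snr_eq_ratio
    using concave_on_saturating_ratio[of Y "Y + 1"] assms
    by (intro concave_on_add) (auto simp: concave_on_const)
  moreover have "concave_on {0<..} (log 2)"
    unfolding log_def by (rule concave_on_cdiv) (auto intro: ln_concave)
  moreover have "(\<lambda>X. 1 + dual_hop_snr X Y) ` {0..} \<subseteq> {0<..}"
    using dual_hop_snr_nonneg assms by fastforce
  moreover have "mono_on {0<..} (log 2)"
    by (rule mono_onI) simp
  ultimately show ?thesis by (rule concave_on_mono_comp)
qed

definition transfer :: "real list \<Rightarrow> nat \<Rightarrow> nat \<Rightarrow> real \<Rightarrow> real list" where
  "transfer x j k \<delta> = x[j := x ! j - \<delta>, k := x ! k + \<delta>]"

lemma nth_transfer:
  assumes "j \<noteq> k" "j < length x" "k < length x" "i < length x"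
  shows "transfer x j k \<delta> ! i = x ! i - (if i = j then \<delta> else 0) + (if i = k then \<delta> else 0)"
  using assms by (auto simp: transfer_def nth_list_update)

lemma sum_transfer:
  assumes "j \<noteq> k" "j < length x" "k < length x" "m \<le> length x"
  shows "(\<Sum>i<m. transfer x j k \<delta> ! i)
       = (\<Sum>i<m. x ! i) - (if j < m then \<delta> else 0) + (if k < m then \<delta> else 0)"
proof -
  have "(\<Sum>i<m. transfer x j k \<delta> ! i)
      = (\<Sum>i<m. x ! i) - (\<Sum>i<m. if i = j then \<delta> else 0) + (\<Sum>i<m. if i = k then \<delta> else 0)"
    using assms by (simp add: nth_transfer sum.distrib sum_subtractf)
  then show ?thesis by simp
qed

(* Partial sums in list order, without sorting: the intermediate lists produced by
   T-transforms need not be sorted. *)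
definition prefix_majorizes :: "nat \<Rightarrow> real list \<Rightarrow> real list \<Rightarrow> bool" where
  "prefix_majorizes N x y \<longleftrightarrow>
     (\<forall>m\<le>N. (\<Sum>i<m. y ! i) \<le> (\<Sum>i<m. x ! i)) \<and> (\<Sum>i<N. x ! i) = (\<Sum>i<N. y ! i)"

lemma sum_lessThan_split_after:
  fixes f :: "nat \<Rightarrow> 'a::comm_monoid_add"
  assumes "j < m"
  shows "(\<Sum>i<m. f i) = (\<Sum>i<j. f i) + f j + (\<Sum>i\<in>{Suc j..<m}. f i)"
  using assms sum.atLeastLessThan_concat[of 0 "Suc j" m f]
  by (simp add: atLeast0LessThan)

lemma prefix_majorizes_transfer:
  assumes maj: "prefix_majorizes N x y" and "length x = N" "j < k" "k < N"
    and between: "\<forall>i. j < i \<and> i < k \<longrightarrow> x ! i = y ! i" and "0 \<le> \<delta>" "\<delta> \<le> x ! j - y ! j"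
  shows "prefix_majorizes N (transfer x j k \<delta>) y"
  unfolding prefix_majorizes_def
proof (intro conjI allI impI)
  fix m assume m: "m \<le> N"
  show "(\<Sum>i<m. y ! i) \<le> (\<Sum>i<m. transfer x j k \<delta> ! i)"
  proof (cases "j < m \<and> m \<le> k")
    case True
    have "(\<Sum>i\<in>{Suc j..<m}. x ! i) = (\<Sum>i\<in>{Suc j..<m}. y ! i)"
      using between True by (intro sum.cong) auto
    moreover have "(\<Sum>i<j. y ! i) \<le> (\<Sum>i<j. x ! i)"
      using maj assms(3,4) unfolding prefix_majorizes_def by simp
    ultimately have "(\<Sum>i<m. y ! i) + (x ! j - y ! j) \<le> (\<Sum>i<m. x ! i)"
      using True sum_lessThan_split_after[of j m "(!) x"] sum_lessThan_split_after[of j m "(!) y"]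
      by simp
    then show ?thesis using True assms sum_transfer[of j k x m] by simp
  next
    case False
    then show ?thesis
      using maj m assms(2-4) sum_transfer[of j k x m] unfolding prefix_majorizes_def by auto
  qed
next
  show "(\<Sum>i<N. transfer x j k \<delta> ! i) = (\<Sum>i<N. y ! i)"
    using maj assms(2-4) sum_transfer[of j k x N] unfolding prefix_majorizes_def by simp
qed

lemma prefix_majorizes_transfer_indices:
  assumes maj: "prefix_majorizes N x y" and len: "length x = N" "length y = N"
    and "x \<noteq> y" and head: "x ! 0 = y ! 0"
  obtains j k where "0 < j" "j < k" "k < N" "y ! j < x ! j" "x ! k < y ! k"
    "\<forall>i. j < i \<and> i < k \<longrightarrow> x ! i = y ! i"
proof -
  have tot: "(\<Sum>i<N. x ! i) = (\<Sum>i<N. y ! i)" using maj unfolding prefix_majorizes_def by simp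
  define J where "J = {i. i < N \<and> y ! i < x ! i}"
  have "J \<noteq> {}"
  proof
    assume "J = {}"
    then have le: "\<forall>i<N. x ! i \<le> y ! i" by (force simp: J_def)
    obtain i where "i < N" "x ! i \<noteq> y ! i" using \<open>x \<noteq> y\<close> len nth_equalityI by metis
    then have "(\<Sum>i<N. x ! i) < (\<Sum>i<N. y ! i)"
      using le by (intro sum_strict_mono_ex1) (auto simp: order.strict_iff_order)
    then show False using tot by simp
  qed
  define j where "j = Max J"
  have "j \<in> J" unfolding j_def using \<open>J \<noteq> {}\<close> by (intro Max_in) (simp add: J_def)
  then have jN: "j < N" and xj: "y ! j < x ! j" by (auto simp: J_def)
  have after_j: "x ! i \<le> y ! i" if "j < i" "i < N" for i
  proof (rule ccontr)
    assume "\<not> x ! i \<le> y ! i"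
    then have "i \<le> j" unfolding j_def using that by (intro Max_ge) (auto simp: J_def)
    then show False using that by simp
  qed
  have "0 < j" using xj head by (cases j) auto
  define K where "K = {i. j < i \<and> i < N \<and> x ! i < y ! i}"
  have "K \<noteq> {}"
  proof
    assume "K = {}"
    then have eq: "x ! i = y ! i" if "j < i" "i < N" for i
      using after_j[OF that] that by (force simp: K_def)
    have "(\<Sum>i<j. y ! i) \<le> (\<Sum>i<j. x ! i)" using maj jN unfolding prefix_majorizes_def by simp
    moreover have "(\<Sum>i\<in>{Suc j..<N}. x ! i) = (\<Sum>i\<in>{Suc j..<N}. y ! i)"
      using eq by (intro sum.cong) auto
    ultimately have "(\<Sum>i<N. y ! i) < (\<Sum>i<N. x ! i)"
      using xj jN sum_lessThan_split_after[of j N "(!) x"] sum_lessThan_split_after[of j N "(!) y"]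
      by simp
    then show False using tot by simp
  qed
  define k where "k = Min K"
  have "k \<in> K" unfolding k_def using \<open>K \<noteq> {}\<close> by (intro Min_in) (simp add: K_def)
  then have "j < k" "k < N" "x ! k < y ! k" by (auto simp: K_def)
  moreover have "\<forall>i. j < i \<and> i < k \<longrightarrow> x ! i = y ! i"
  proof (intro allI impI)
    fix i assume i: "j < i \<and> i < k"
    have "\<not> x ! i < y ! i"
    proof
      assume "x ! i < y ! i"
      then have "k \<le> i" unfolding k_def using i \<open>k < N\<close> by (intro Min_le) (auto simp: K_def)
      then show False using i by simp
    qed
    then show "x ! i = y ! i" using after_j i \<open>k < N\<close> by force
  qed
  ultimately show ?thesis using that \<open>0 < j\<close> xj by blast
qed

lemma prefix_majorizes_imp_le:
  fixes \<phi> :: "real list \<Rightarrow> real"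
  assumes transfer_mono: "\<And>x j k \<delta>. length x = N \<Longrightarrow> \<forall>i<N. 0 \<le> x ! i \<Longrightarrow> 0 < j \<Longrightarrow> j < k
      \<Longrightarrow> k < N \<Longrightarrow> 0 \<le> \<delta> \<Longrightarrow> \<delta> \<le> x ! j - x ! k \<Longrightarrow> \<phi> x \<le> \<phi> (transfer x j k \<delta>)"
    and y: "length y = N" "sorted_wrt (\<ge>) y" "\<forall>i<N. 0 \<le> y ! i"
  shows "length x = N \<Longrightarrow> \<forall>i<N. 0 \<le> x ! i \<Longrightarrow> x ! 0 = y ! 0 \<Longrightarrow> prefix_majorizes N x y
      \<Longrightarrow> \<phi> x \<le> \<phi> y"
proof (induction "card {i. i < N \<and> x ! i \<noteq> y ! i}" arbitrary: x rule: less_induct)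
  case less
  show ?case
  proof (cases "x = y")
    case False
    obtain j k where jk: "0 < j" "j < k" "k < N" "y ! j < x ! j" "x ! k < y ! k"
        and between: "\<forall>i. j < i \<and> i < k \<longrightarrow> x ! i = y ! i"
      using prefix_majorizes_transfer_indices less.prems y(1) False by metis
    define \<delta> where "\<delta> = min (x ! j - y ! j) (y ! k - x ! k)"
    define x' where "x' = transfer x j k \<delta>"
    have nth_x': "x' ! i = x ! i - (if i = j then \<delta> else 0) + (if i = k then \<delta> else 0)"
      if "i < N" for i
      using nth_transfer[of j k x i \<delta>] that jk less.prems(1) by (simp add: x'_def)
    have "y ! k \<le> y ! j" using y(1,2) jk by (simp add: sorted_wrt_iff_nth_less)
    then have "\<phi> x \<le> \<phi> x'"
      unfolding x'_def using jk less.prems(1,2) by (intro transfer_mono) (auto simp: \<delta>_def)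
    also have "\<phi> x' \<le> \<phi> y"
    proof (rule less.hyps)
      \<comment> \<open>the transfer makes entry j or entry k agree with y\<close>
      have "{i. i < N \<and> x' ! i \<noteq> y ! i} \<subseteq> {i. i < N \<and> x ! i \<noteq> y ! i}"
        using jk by (auto simp: nth_x' split: if_splits)
      moreover have "x' ! j = y ! j \<or> x' ! k = y ! k"
        using jk by (auto simp: nth_x' \<delta>_def min_def)
      then have "{i. i < N \<and> x' ! i \<noteq> y ! i} \<noteq> {i. i < N \<and> x ! i \<noteq> y ! i}"
        using jk by force
      ultimately show "card {i. i < N \<and> x' ! i \<noteq> y ! i} < card {i. i < N \<and> x ! i \<noteq> y ! i}"
        by (intro psubset_card_mono) auto
      show "length x' = N" using less.prems(1) by (simp add: x'_def transfer_def)
      have "0 \<le> y ! j" using y(3) jk by simp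
      then show "\<forall>i<N. 0 \<le> x' ! i"
        using less.prems(2) jk by (auto simp: nth_x' \<delta>_def)
      show "x' ! 0 = y ! 0" using less.prems(3) jk by (simp add: nth_x')
      show "prefix_majorizes N x' y"
        unfolding x'_def using less.prems(1,4) jk between
        by (intro prefix_majorizes_transfer) (auto simp: \<delta>_def)
    qed
    finally show ?thesis .
  qed simp
qed

lemma concave_symmetric_imp_transfer_mono:
  fixes \<phi> :: "real list \<Rightarrow> real"
  assumes symmetric: "\<And>x p. length x = N \<Longrightarrow> bij_betw p {..<N} {..<N} \<Longrightarrow> p 0 = 0
      \<Longrightarrow> \<phi> (map (\<lambda>i. x ! p i) [0..<N]) = \<phi> x"
    and concave: "\<And>x z t. length x = N \<Longrightarrow> length z = N \<Longrightarrow> \<forall>i<N. 0 \<le> x ! i \<Longrightarrow> \<forall>i<N. 0 \<le> z ! i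
      \<Longrightarrow> x ! 0 = z ! 0 \<Longrightarrow> 0 \<le> t \<Longrightarrow> t \<le> 1
      \<Longrightarrow> (1 - t) * \<phi> x + t * \<phi> z \<le> \<phi> (map (\<lambda>i. (1 - t) * x ! i + t * z ! i) [0..<N])"
    and x: "length x = N" "\<forall>i<N. 0 \<le> x ! i"
    and jk: "0 < j" "j < k" "k < N" and \<delta>: "0 \<le> \<delta>" "\<delta> \<le> x ! j - x ! k"
  shows "\<phi> x \<le> \<phi> (transfer x j k \<delta>)"
proof (cases "\<delta> = 0")
  case True
  then show ?thesis by (simp add: transfer_def)
next
  case False
  \<comment> \<open>the T-transform is the convex combination of x and x with entries j, k swapped\<close>
  define z where "z = map (\<lambda>i. x ! Transposition.transpose j k i) [0..<N]"
  define t where "t = \<delta> / (x ! j - x ! k)"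
  have gap: "0 < x ! j - x ! k" using \<delta> False by linarith
  have t: "0 \<le> t" "t \<le> 1" using \<delta> gap by (auto simp: t_def)
  have transpose_less: "Transposition.transpose j k i < N" if "i < N" for i
    using that jk by (simp add: Transposition.transpose_def)
  have z: "length z = N" "\<forall>i<N. 0 \<le> z ! i" "x ! 0 = z ! 0"
    using x jk transpose_less by (auto simp: z_def)
  have "\<phi> z = \<phi> x"
    unfolding z_def using x jk by (intro symmetric) auto
  then have "\<phi> x = (1 - t) * \<phi> x + t * \<phi> z" by (simp add: algebra_simps)
  also have "\<dots> \<le> \<phi> (map (\<lambda>i. (1 - t) * x ! i + t * z ! i) [0..<N])"
    using x z t by (intro concave) auto
  also have "map (\<lambda>i. (1 - t) * x ! i + t * z ! i) [0..<N] = transfer x j k \<delta>"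
  proof (rule nth_equalityI)
    fix i assume "i < length (map (\<lambda>i. (1 - t) * x ! i + t * z ! i) [0..<N])"
    then have "i < N" by simp
    moreover have "t * (x ! j - x ! k) = \<delta>" using gap by (simp add: t_def)
    ultimately show "map (\<lambda>i. (1 - t) * x ! i + t * z ! i) [0..<N] ! i = transfer x j k \<delta> ! i"
      using x jk by (auto simp: z_def nth_transfer Transposition.transpose_def algebra_simps)
  qed (use x in \<open>simp add: transfer_def\<close>)
  finally show ?thesis .
qed

lemma sorted_majorizes_imp_prefix_majorizes:
  assumes "length a = N" "length b = N" "sorted_wrt (\<ge>) a" "sorted_wrt (\<ge>) b" "majorizes a b"
  shows "prefix_majorizes N a b"
proof -
  have rev_sort: "rev (sort l) = l" if "sorted_wrt (\<ge>) l" for l :: "real list"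
  proof -
    have "sort l = rev l"
      using that by (intro properties_for_sort) (simp_all add: sorted_wrt_rev)
    then show ?thesis by simp
  qed
  have prefix_sum: "sum_list (take m l) = (\<Sum>i<m. l ! i)" if "m \<le> length l" for m and l :: "real list"
    using that by (simp add: sum_list_sum_nth atLeast0LessThan min_def)
  have "rev (sort a) = a" "rev (sort b) = b" using assms(3,4) by (simp_all add: rev_sort)
  then have take_le: "sum_list (take m b) \<le> sum_list (take m a)" if "1 \<le> m" "m < N" for m
    using assms(1,5) that unfolding majorizes_def by auto
  have prefix_le: "(\<Sum>i<m. b ! i) \<le> (\<Sum>i<m. a ! i)" if "1 \<le> m" "m < N" for m
  proof -
    have "m \<le> length a" "m \<le> length b" using that assms(1,2) by auto
    then show ?thesis using take_le[OF that] by (simp add: prefix_sum)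
  qed
  have "sum_list a = sum_list b" using assms(5) by (simp add: majorizes_def)
  then have total: "(\<Sum>i<N. a ! i) = (\<Sum>i<N. b ! i)"
    using assms(1,2) by (simp add: sum_list_sum_nth atLeast0LessThan)
  show ?thesis
    unfolding prefix_majorizes_def
  proof (intro conjI allI impI total)
    fix m assume "m \<le> N"
    then consider "m = 0" | "1 \<le> m" "m < N" | "m = N" by linarith
    then show "(\<Sum>i<m. b ! i) \<le> (\<Sum>i<m. a ! i)"
    proof cases
      case 2
      then show ?thesis by (rule prefix_le)
    qed (use total in simp_all)
  qed
qed

lemma prefix_majorizes_head_le:
  assumes "prefix_majorizes N a b" "1 \<le> N"
  shows "b ! 0 \<le> a ! 0"
proof -
  have "(\<Sum>i<1. b ! i) \<le> (\<Sum>i<1. a ! i)"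
    using assms unfolding prefix_majorizes_def by blast
  then show ?thesis by simp
qed

lemma measurable_Complex_pair [measurable]:
  "(\<lambda>(x, y). Complex x y) \<in> borel_measurable (borel \<Otimes>\<^sub>M borel)"
  unfolding Complex_eq by measurable

lemma prob_space_cgauss: "prob_space cgauss"
  unfolding cgauss_def
  by (intro prob_space.prob_space_distr prob_space_pair prob_space_normal_density) simp_all

lemma sets_cgauss [measurable_cong, simp]: "sets cgauss = sets borel"
  unfolding cgauss_def by simp

lemma integrable_cgauss_norm_sq: "integrable cgauss (\<lambda>z. (cmod z)\<^sup>2)"
proof -
  let ?D = "density lborel (normal_density 0 (sqrt (1/2)))"
  have D: "prob_space ?D" by (rule prob_space_normal_density) simp
  interpret pair_sigma_finite ?D ?D
    using D by (intro pair_sigma_finite.intro prob_space_imp_sigma_finite)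
  have "integrable ?D (\<lambda>x. x\<^sup>2)"
    using integrable_normal_moment[of "sqrt (1/2)" 0 2]
    by (subst integrable_density) (auto simp: normal_density_nonneg)
  then have re: "integrable (?D \<Otimes>\<^sub>M ?D) (\<lambda>p. (fst p)\<^sup>2)"
    by (subst integrable_distr_eq[symmetric, where N="?D" and g=fst and f="\<lambda>x. x\<^sup>2"])
       (simp_all add: prob_space.distr_pair_fst[OF D])
  then have im: "integrable (?D \<Otimes>\<^sub>M ?D) (\<lambda>p. (snd p)\<^sup>2)"
    by (subst integrable_product_swap_iff[symmetric]) (simp add: split_beta')
  have "integrable (?D \<Otimes>\<^sub>M ?D) (\<lambda>p. (cmod ((\<lambda>(x, y). Complex x y) p))\<^sup>2)"
    using Bochner_Integration.integrable_add[OF re im] by (simp add: case_prod_beta cmod_def)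
  then show ?thesis
    unfolding cgauss_def by (subst integrable_distr_eq) auto
qed

lemma sets_channel_space [measurable_cong]:
  "sets (channel_space N) = sets (PiM {..<N} (\<lambda>_. cgauss) \<Otimes>\<^sub>M cgauss)"
  unfolding channel_space_def ..

lemma integrable_channel_space_norm_sq:
  assumes "i < N"
  shows "integrable (channel_space N) (\<lambda>w. (cmod (fst w i))\<^sup>2)"
proof -
  have "distr (PiM {..<N} (\<lambda>_. cgauss)) cgauss (\<lambda>g. g i) = cgauss"
    using assms prob_space_cgauss by (subst distr_PiM_component) auto
  then have "integrable (PiM {..<N} (\<lambda>_. cgauss)) (\<lambda>g. (cmod (g i))\<^sup>2)"
    using assms integrable_cgauss_norm_sq
    by (subst integrable_distr_eq[symmetric, where N=cgauss and g="\<lambda>g. g i" and f="\<lambda>z. (cmod z)\<^sup>2"])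
       (simp_all add: measurable_component_singleton)
  then show ?thesis
    unfolding channel_space_def
    by (subst integrable_distr_eq[symmetric, where N="PiM {..<N} (\<lambda>_. cgauss)" and g=fst])
       (simp_all add: prob_space.distr_pair_fst[OF prob_space_cgauss])
qed

(* Coordinates i \<ge> N are constantly undefined on the product space, hence measurable too. *)
lemma measurable_channel_coordinate [measurable]:
  "(\<lambda>w. fst w i) \<in> borel_measurable (channel_space N)"
proof (cases "i < N")
  case False
  then have "\<forall>w\<in>space (channel_space N). fst w i = undefined"
    by (auto simp: channel_space_def space_pair_measure space_PiM PiE_def extensional_def)
  then show ?thesis by (subst measurable_cong[where g="\<lambda>_. undefined"]) auto
qed measurable

lemma distr_channel_space_permute:
  assumes p: "bij_betw p {..<N} {..<N}"
  shows "distr (channel_space N) (channel_space N) (\<lambda>(g, q). (\<lambda>i\<in>{..<N}. g (p i), q))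
       = channel_space N"
proof -
  let ?P = "PiM {..<N} (\<lambda>_. cgauss)" and ?T = "\<lambda>g. \<lambda>i\<in>{..<N}. g (p i)"
  have p_less: "p i < N" if "i < N" for i using p that by (auto dest: bij_betwE)
  have T: "?T \<in> measurable ?P ?P" using p_less by (intro measurable_restrict) (measurable; simp)
  have "distr ?P ?P ?T = ?P"
    using distr_PiM_reindex[of "{..<N}" "\<lambda>_. cgauss" p "{..<N}"] prob_space_cgauss p_less p
    by (auto simp: bij_betw_def)
  moreover have "distr ?P ?P ?T \<Otimes>\<^sub>M distr cgauss cgauss (\<lambda>q. q)
      = distr (?P \<Otimes>\<^sub>M cgauss) (?P \<Otimes>\<^sub>M cgauss) (\<lambda>(g, q). (?T g, q))"
    using prob_space_imp_sigma_finite[OF prob_space_cgauss]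
    by (intro pair_measure_distr[OF T]) simp_all
  ultimately show ?thesis unfolding channel_space_def by (simp add: distr_id)
qed

lemma measurable_channel_permute:
  assumes "bij_betw p {..<N} {..<N}"
  shows "(\<lambda>(g, q). (\<lambda>i\<in>{..<N}. g (p i), q)) \<in> measurable (channel_space N) (channel_space N)"
proof -
  have "p i \<in> {..<N}" if "i \<in> {..<N}" for i using assms that by (auto dest: bij_betwE)
  then show ?thesis
    unfolding case_prod_beta' channel_space_def
    by (intro measurable_Pair measurable_restrict) (simp_all add: channel_space_def[symmetric])
qed

locale relay_channel =
  fixes N :: nat and \<eta> \<theta> \<rho> d1 d2 \<tau> :: real
  assumes N_pos: "1 \<le> N" and eta_pos: "0 < \<eta>" and theta_pos: "0 < \<theta>" and theta_less_1: "\<theta> < 1"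
    and rho_pos: "0 < \<rho>" and d1_pos: "0 < d1" and d2_pos: "0 < d2"
begin

definition gain_X :: real where "gain_X = \<eta> * \<theta> * \<rho> / (d1 powr \<tau> * d2 powr \<tau>)"

definition gain_Y :: real where "gain_Y = (1 - \<theta>) * \<rho> / d1 powr \<tau>"

lemma gain_X_pos: "0 < gain_X" and gain_Y_pos: "0 < gain_Y"
  using eta_pos theta_pos theta_less_1 rho_pos d1_pos d2_pos by (simp_all add: gain_X_def gain_Y_def)

definition rate :: "real list \<Rightarrow> real list \<Rightarrow> (nat \<Rightarrow> complex) \<times> complex \<Rightarrow> real" where
  "rate lam sig w = log 2 (1 + gammaS N \<eta> \<theta> \<rho> d1 d2 \<tau> lam sig (fst w) (snd w))"

lemma CS_eq_integral_rate: "CS N \<eta> \<theta> \<rho> d1 d2 \<tau> lam sig = (\<integral>w. rate lam sig w \<partial>channel_space N) / 2"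
  by (simp add: CS_def rate_def)

lemma rate_eq_dual_hop_snr:
  "rate lam sig w = log 2 (1 + dual_hop_snr
      (gain_X * (\<Sum>i<N. lam ! i * (cmod (fst w i))\<^sup>2) * (sig ! 0 * (cmod (snd w))\<^sup>2))
      (gain_Y * (lam ! 0 * (cmod (fst w 0))\<^sup>2)))"
proof -
  have "d1 powr (2 * \<tau>) = d1 powr \<tau> * d1 powr \<tau>" by (subst powr_add[symmetric]) simp
  then have "\<eta> * \<theta> * (1 - \<theta>) * \<rho>\<^sup>2 / (d1 powr (2 * \<tau>) * d2 powr \<tau>) = gain_X * gain_Y"
    unfolding gain_X_def gain_Y_def
    by (simp only: times_divide_times_eq) (simp add: power2_eq_square ac_simps)
  then show ?thesis
    unfolding rate_def gammaS_def Let_def dual_hop_snr_def gain_X_def[symmetric] gain_Y_def[symmetric]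
    by (simp add: ac_simps)
qed
lemma borel_measurable_rate: "rate lam sig \<in> borel_measurable (channel_space N)"
  unfolding rate_def gammaS_def Let_def by measurable

lemma integrable_rate:
  assumes lam: "\<forall>i<N. 0 \<le> lam ! i" and sig: "0 \<le> sig ! 0"
  shows "integrable (channel_space N) (rate lam sig)"
proof (rule Bochner_Integration.integrable_bound)
  show "integrable (channel_space N) (\<lambda>w. gain_Y * lam ! 0 / ln 2 * (cmod (fst w 0))\<^sup>2)"
    using integrable_channel_space_norm_sq[of 0 N] N_pos by simp
  show "AE w in channel_space N. norm (rate lam sig w) \<le> norm (gain_Y * lam ! 0 / ln 2 * (cmod (fst w 0))\<^sup>2)"
  proof (rule AE_I2)
    fix w :: "(nat \<Rightarrow> complex) \<times> complex"
    define X where "X = gain_X * (\<Sum>i<N. lam ! i * (cmod (fst w i))\<^sup>2) * (sig ! 0 * (cmod (snd w))\<^sup>2)"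
    define Y where "Y = gain_Y * (lam ! 0 * (cmod (fst w 0))\<^sup>2)"
    have "0 \<le> lam ! 0" using lam N_pos by simp
    then have XY: "0 \<le> X" "0 \<le> Y"
      using lam sig gain_X_pos gain_Y_pos
      by (auto simp: X_def Y_def intro!: sum_nonneg mult_nonneg_nonneg)
    have "log 2 (1 + dual_hop_snr X Y) \<le> dual_hop_snr X Y / ln 2"
      unfolding log_def using dual_hop_snr_nonneg[OF XY] ln_add_one_self_le_self
      by (intro divide_right_mono) auto
    also have "\<dots> \<le> Y / ln 2" using dual_hop_snr_le[OF XY] by (simp add: divide_right_mono)
    finally show "norm (rate lam sig w) \<le> norm (gain_Y * lam ! 0 / ln 2 * (cmod (fst w 0))\<^sup>2)"
      using dual_hop_snr_nonneg[OF XY] XY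
      by (simp add: rate_eq_dual_hop_snr X_def[symmetric] Y_def[symmetric]) (simp add: Y_def)
  qed
qed (rule borel_measurable_rate)

lemma CS_mono_sig:
  assumes lam: "\<forall>i<N. 0 \<le> lam ! i" and sig: "0 \<le> sig ! 0" "sig ! 0 \<le> sig' ! 0"
  shows "CS N \<eta> \<theta> \<rho> d1 d2 \<tau> lam sig \<le> CS N \<eta> \<theta> \<rho> d1 d2 \<tau> lam sig'"
proof -
  have "rate lam sig w \<le> rate lam sig' w" for w
  proof -
    define S where "S = (\<Sum>i<N. lam ! i * (cmod (fst w i))\<^sup>2)"
    define Y where "Y = gain_Y * (lam ! 0 * (cmod (fst w 0))\<^sup>2)"
    have "0 \<le> S" "0 \<le> Y" "0 \<le> lam ! 0"
      using lam N_pos gain_Y_pos by (auto simp: S_def Y_def intro!: sum_nonneg)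
    then have "dual_hop_snr (gain_X * S * (sig ! 0 * (cmod (snd w))\<^sup>2)) Y
        \<le> dual_hop_snr (gain_X * S * (sig' ! 0 * (cmod (snd w))\<^sup>2)) Y"
      using sig gain_X_pos by (intro dual_hop_snr_mono mult_left_mono mult_right_mono) auto
    moreover have "0 \<le> dual_hop_snr (gain_X * S * (sig ! 0 * (cmod (snd w))\<^sup>2)) Y"
      using \<open>0 \<le> S\<close> \<open>0 \<le> Y\<close> sig gain_X_pos by (intro dual_hop_snr_nonneg) auto
    ultimately show ?thesis
      by (simp add: rate_eq_dual_hop_snr S_def[symmetric] Y_def[symmetric])
  qed
  then show ?thesis
    unfolding CS_eq_integral_rate using lam sig
    by (intro divide_right_mono integral_mono integrable_rate) auto
qed

lemma CS_concave_lam: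
  assumes x: "length x = N" "\<forall>i<N. 0 \<le> x ! i" and z: "length z = N" "\<forall>i<N. 0 \<le> z ! i"
    and head: "x ! 0 = z ! 0" and sig: "0 \<le> sig ! 0" and t: "0 \<le> t" "t \<le> 1"
  shows "(1 - t) * CS N \<eta> \<theta> \<rho> d1 d2 \<tau> x sig + t * CS N \<eta> \<theta> \<rho> d1 d2 \<tau> z sig
     \<le> CS N \<eta> \<theta> \<rho> d1 d2 \<tau> (map (\<lambda>i. (1 - t) * x ! i + t * z ! i) [0..<N]) sig"
proof -
  let ?y = "map (\<lambda>i. (1 - t) * x ! i + t * z ! i) [0..<N]"
  have y: "\<forall>i<N. 0 \<le> ?y ! i" using x z t by auto
  have pointwise: "(1 - t) * rate x sig w + t * rate z sig w \<le> rate ?y sig w" for w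
  proof -
    define b where "b = gain_X * (sig ! 0 * (cmod (snd w))\<^sup>2)"
    define Y where "Y = gain_Y * (x ! 0 * (cmod (fst w 0))\<^sup>2)"
    define S where "S l = (\<Sum>i<N. l ! i * (cmod (fst w i))\<^sup>2)" for l
    have rate_S: "rate l sig w = log 2 (1 + dual_hop_snr (S l * b) (gain_Y * (l ! 0 * (cmod (fst w 0))\<^sup>2)))"
      for l by (simp add: rate_eq_dual_hop_snr S_def b_def ac_simps)
    have "0 \<le> b" "0 \<le> Y" "0 \<le> S x" "0 \<le> S z"
      using x z sig N_pos gain_X_pos gain_Y_pos by (auto simp: b_def Y_def S_def intro!: sum_nonneg)
    have "S ?y * b = (1 - t) * (S x * b) + t * (S z * b)"
      by (simp add: S_def sum_distrib_left sum.distrib[symmetric] algebra_simps)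
    moreover have "?y ! 0 = x ! 0" using N_pos head by (simp add: algebra_simps)
    ultimately have "rate ?y sig w = log 2 (1 + dual_hop_snr ((1 - t) * (S x * b) + t * (S z * b)) Y)"
      by (simp add: rate_S Y_def)
    moreover have "rate x sig w = log 2 (1 + dual_hop_snr (S x * b) Y)"
      and "rate z sig w = log 2 (1 + dual_hop_snr (S z * b) Y)"
      by (simp_all add: rate_S Y_def head)
    ultimately show ?thesis
      using concave_onD[OF concave_on_log_dual_hop_snr[OF \<open>0 \<le> Y\<close>], of t "S x * b" "S z * b"]
        t \<open>0 \<le> b\<close> \<open>0 \<le> S x\<close> \<open>0 \<le> S z\<close> by simp
  qed
  have "(1 - t) * CS N \<eta> \<theta> \<rho> d1 d2 \<tau> x sig + t * CS N \<eta> \<theta> \<rho> d1 d2 \<tau> z sig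
      = (\<integral>w. (1 - t) * rate x sig w + t * rate z sig w \<partial>channel_space N) / 2"
    using integrable_rate[OF x(2) sig] integrable_rate[OF z(2) sig]
    by (simp add: CS_eq_integral_rate)
  also have "\<dots> \<le> CS N \<eta> \<theta> \<rho> d1 d2 \<tau> ?y sig"
    unfolding CS_eq_integral_rate
    using pointwise integrable_rate[OF x(2) sig] integrable_rate[OF z(2) sig] integrable_rate[OF y sig]
    by (intro divide_right_mono integral_mono) auto
  finally show ?thesis .
qed

lemma CS_permute_lam:
  assumes p: "bij_betw p {..<N} {..<N}" "p 0 = 0" and lam: "length lam = N"
  shows "CS N \<eta> \<theta> \<rho> d1 d2 \<tau> (map (\<lambda>i. lam ! p i) [0..<N]) sig = CS N \<eta> \<theta> \<rho> d1 d2 \<tau> lam sig"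
proof -
  \<comment> \<open>relabelling the fading coefficients by the inverse permutation permutes lam\<close>
  define p' where "p' = inv_into {..<N} p"
  have p': "bij_betw p' {..<N} {..<N}" using p(1) by (simp add: p'_def bij_betw_inv_into)
  let ?T = "\<lambda>(g, q). (\<lambda>i\<in>{..<N}. g (p' i), q)"
  have "rate lam sig (?T w) = rate (map (\<lambda>i. lam ! p i) [0..<N]) sig w" for w
  proof -
    have p'_0: "p' 0 = 0"
      using inv_into_f_f[of p "{..<N}" 0] p N_pos by (simp add: p'_def bij_betw_def)
    have p'_p: "p' (p i) = i" if "i < N" for i
      using p that by (simp add: p'_def bij_betw_def)
    have "(\<Sum>i<N. lam ! i * (cmod (fst (?T w) i))\<^sup>2) = (\<Sum>i<N. lam ! i * (cmod (fst w (p' i)))\<^sup>2)"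
      by (simp add: case_prod_beta')
    also have "\<dots> = (\<Sum>i<N. lam ! p i * (cmod (fst w (p' (p i))))\<^sup>2)"
      using sum.reindex_bij_betw[OF p(1), of "\<lambda>i. lam ! i * (cmod (fst w (p' i)))\<^sup>2"] by simp
    also have "\<dots> = (\<Sum>i<N. map (\<lambda>i. lam ! p i) [0..<N] ! i * (cmod (fst w i))\<^sup>2)"
      using p'_p by simp
    finally show ?thesis
      using N_pos p(2) p'_0 by (simp add: rate_eq_dual_hop_snr case_prod_beta')
  qed
  then have "(\<integral>w. rate lam sig w \<partial>channel_space N)
      = (\<integral>w. rate (map (\<lambda>i. lam ! p i) [0..<N]) sig w \<partial>channel_space N)"
    by (subst distr_channel_space_permute[OF p', symmetric])
       (simp add: integral_distr measurable_channel_permute[OF p'] borel_measurable_rate)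
  then show ?thesis by (simp add: CS_eq_integral_rate)
qed

lemma CS_transfer_mono_lam:
  assumes sig: "0 \<le> sig ! 0" and x: "length x = N" "\<forall>i<N. 0 \<le> x ! i"
    and jk: "0 < j" "j < k" "k < N" and \<delta>: "0 \<le> \<delta>" "\<delta> \<le> x ! j - x ! k"
  shows "CS N \<eta> \<theta> \<rho> d1 d2 \<tau> x sig \<le> CS N \<eta> \<theta> \<rho> d1 d2 \<tau> (transfer x j k \<delta>) sig"
proof (rule concave_symmetric_imp_transfer_mono[where \<phi>="\<lambda>l. CS N \<eta> \<theta> \<rho> d1 d2 \<tau> l sig"])
  show "CS N \<eta> \<theta> \<rho> d1 d2 \<tau> (map (\<lambda>i. l ! p i) [0..<N]) sig = CS N \<eta> \<theta> \<rho> d1 d2 \<tau> l sig"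
    if "length l = N" "bij_betw p {..<N} {..<N}" "p 0 = 0" for l p
    using that by (intro CS_permute_lam)
  show "(1 - t) * CS N \<eta> \<theta> \<rho> d1 d2 \<tau> l sig + t * CS N \<eta> \<theta> \<rho> d1 d2 \<tau> l' sig
      \<le> CS N \<eta> \<theta> \<rho> d1 d2 \<tau> (map (\<lambda>i. (1 - t) * l ! i + t * l' ! i) [0..<N]) sig"
    if "length l = N" "length l' = N" "\<forall>i<N. 0 \<le> l ! i" "\<forall>i<N. 0 \<le> l' ! i" "l ! 0 = l' ! 0"
      "0 \<le> t" "t \<le> 1" for l l' t
    using that sig by (intro CS_concave_lam)
qed (use x jk \<delta> in auto)

lemma CS_antimono_lam:
  assumes sig: "0 \<le> sig ! 0"
    and lam: "length lam = N" "\<forall>i<N. 0 \<le> lam ! i"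
    and lam': "length lam' = N" "sorted_wrt (\<ge>) lam'" "\<forall>i<N. 0 \<le> lam' ! i"
    and "lam ! 0 = lam' ! 0" and "prefix_majorizes N lam lam'"
  shows "CS N \<eta> \<theta> \<rho> d1 d2 \<tau> lam sig \<le> CS N \<eta> \<theta> \<rho> d1 d2 \<tau> lam' sig"
  using CS_transfer_mono_lam[OF sig] lam' lam assms(7,8) by (rule prefix_majorizes_imp_le)

end

theorem proposition3:
  fixes N :: nat and \<eta> \<theta> \<rho> d1 d2 \<tau> :: real
  assumes "N \<ge> 1" and "0 < \<eta>" and "\<eta> \<le> 1" and "0 < \<theta>" and "\<theta> < 1"
    and "\<rho> > 0" and "d1 > 0" and "d2 > 0" and "\<tau> > 0"
  shows "(\<forall>lam sig1 sig2. eigvec N lam \<and> eigvec N sig1 \<and> eigvec N sig2 \<and> majorizes sig1 sig2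
            \<longrightarrow> CS N \<eta> \<theta> \<rho> d1 d2 \<tau> lam sig1 \<ge> CS N \<eta> \<theta> \<rho> d1 d2 \<tau> lam sig2)
       \<and> (\<forall>sig lam1 lam2. eigvec N sig \<and> eigvec N lam1 \<and> eigvec N lam2 \<and> majorizes lam1 lam2
            \<and> lam1 ! 0 = lam2 ! 0
            \<longrightarrow> CS N \<eta> \<theta> \<rho> d1 d2 \<tau> lam1 sig \<le> CS N \<eta> \<theta> \<rho> d1 d2 \<tau> lam2 sig)"
proof -
  interpret relay_channel N \<eta> \<theta> \<rho> d1 d2 \<tau>
    using assms by unfold_locales auto
  have eigvec: "length v = N" "sorted_wrt (\<ge>) v" "\<forall>i<N. 0 \<le> v ! i" if "eigvec N v" for v
    using that by (auto simp: eigvec_def less_imp_le)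
  have prefix: "prefix_majorizes N a b" if "eigvec N a" "eigvec N b" "majorizes a b" for a b
    using eigvec[OF that(1)] eigvec[OF that(2)] that(3) by (intro sorted_majorizes_imp_prefix_majorizes)
  have head: "0 \<le> v ! 0" if "eigvec N v" for v
    using eigvec(3)[OF that] assms(1) by simp
  show ?thesis
  proof (intro conjI allI impI; elim conjE)
    fix lam sig1 sig2
    assume "eigvec N lam" "eigvec N sig1" "eigvec N sig2" "majorizes sig1 sig2"
    then show "CS N \<eta> \<theta> \<rho> d1 d2 \<tau> lam sig2 \<le> CS N \<eta> \<theta> \<rho> d1 d2 \<tau> lam sig1"
      using prefix_majorizes_head_le[OF prefix assms(1)] eigvec head by (intro CS_mono_sig) auto
  next
    fix sig lam1 lam2
    assume "eigvec N sig" "eigvec N lam1" "eigvec N lam2" "majorizes lam1 lam2" "lam1 ! 0 = lam2 ! 0"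
    then show "CS N \<eta> \<theta> \<rho> d1 d2 \<tau> lam1 sig \<le> CS N \<eta> \<theta> \<rho> d1 d2 \<tau> lam2 sig"
      using prefix eigvec head by (intro CS_antimono_lam) auto
  qed
qed

end
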